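(* Let $k \ge 2$ and $q \ge 0$ be integers with $k$ even, and let $s \in \{0,1\}$ be the unique integer satisfying $s \equiv q + \frac{k-2}{2} \pmod 2$. Then, for any integer $n$ such that \[n \ge \max\left\{k, \frac{k^2}{4} + \frac{q-s}{2}k+s\right\}\] and any function $f:[n]\to \{-1,1\}$ with $|f([n])| \le q$, there is a $k$-block $B\subseteq[n]$ with $f(B)=0$.
   Context: $[n]=\{1,\dots,n\}$; $f(Y)=\sum_{y\in Y}f(y)$; a $k$-block is a set of $k$ consecutive integers. *)

theory Defs
  imports Main
begin

definition block :: "int \<Rightarrow> int \<Rightarrow> int set" where
  "block k b = {b..b + k - 1}"

end

theory Submission
  imports Defs
begin

text \<open>Suppose no k-block has zero sum. Each block sum is even (k is even and f is odd-valued),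
  and sliding a block by one changes its sum by at most 2, so all block sums have the same
  sign; replacing f by -f we may assume they are all at least 2. Write n = km + r with
  0 \<le> r < k. Covering [km] by m disjoint blocks gives f([n]) \<ge> 2m - r; covering [k(m-1)]
  by m - 1 blocks and adding the last two blocks [k(m-1)+1, km] and [n-k+1, n] gives
  f([n]) \<ge> 2m + 2 - k + r. For n as large as assumed one of these exceeds q.\<close>

lemma sum_atLeastAtMost_split_int:
  fixes f :: "int \<Rightarrow> 'a::comm_monoid_add"
  assumes "a - 1 \<le> b" "b \<le> c"
  shows "sum f {a..c} = sum f {a..b} + sum f {b+1..c}"
proof -
  have "{a..c} = {a..b} \<union> {b+1..c}" using assms by auto
  then show ?thesis by (simp add: sum.union_disjoint)
qed

lemma abs_sum_atLeastAtMost_le: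
  fixes f :: "int \<Rightarrow> int"
  assumes "\<forall>x\<in>{a..b}. \<bar>f x\<bar> \<le> 1" "a \<le> b + 1"
  shows "\<bar>sum f {a..b}\<bar> \<le> b - a + 1"
proof -
  have "\<bar>sum f {a..b}\<bar> \<le> (\<Sum>x\<in>{a..b}. \<bar>f x\<bar>)" by (rule sum_abs)
  also have "\<dots> \<le> (\<Sum>x\<in>{a..b}. 1)" using assms(1) by (intro sum_mono) auto
  also have "\<dots> = b - a + 1" using assms(2) by simp
  finally show ?thesis .
qed

lemma even_sum_block:
  fixes f :: "int \<Rightarrow> int"
  assumes "\<forall>x\<in>block k b. odd (f x)" "even k" "k \<ge> 0"
  shows "even (sum f (block k b))"
proof -
  have "{x \<in> block k b. odd (f x)} = block k b" using assms(1) by auto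
  moreover have "even (card (block k b))"
    using assms(2,3) by (simp add: block_def even_nat_iff)
  ultimately show ?thesis by (simp add: even_sum_iff block_def)
qed

lemma sum_block_shift:
  fixes f :: "int \<Rightarrow> int"
  assumes "k \<ge> 1"
  shows "sum f (block k (b+1)) = sum f (block k b) - f b + f (b+k)"
proof -
  have "sum f {b..b+k-1} = f b + sum f {b+1..b+k-1}"
    using sum_atLeastAtMost_split_int[of b b "b+k-1" f] assms by simp
  moreover have "sum f {b+1..b+k} = sum f {b+1..b+k-1} + f (b+k)"
    using sum_atLeastAtMost_split_int[of "b+1" "b+k-1" "b+k" f] assms by simp
  ultimately show ?thesis by (simp add: block_def)
qed

lemma block_sums_ge_two:
  fixes f :: "int \<Rightarrow> int"
  assumes f: "\<forall>x\<in>{1..n}. f x \<in> {-1, 1}" and "even k" "k \<ge> 1"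
    and nonzero: "\<forall>b. 1 \<le> b \<and> b + k - 1 \<le> n \<longrightarrow> sum f (block k b) \<noteq> 0"
    and first: "sum f (block k 1) > 0"
  shows "\<forall>b. 1 \<le> b \<and> b + k - 1 \<le> n \<longrightarrow> sum f (block k b) \<ge> 2"
proof -
  have even_block: "even (sum f (block k b))" if "1 \<le> b" "b + k - 1 \<le> n" for b
  proof (rule even_sum_block)
    have "f x \<in> {-1, 1}" if "x \<in> block k b" for x
      using f \<open>x \<in> block k b\<close> \<open>1 \<le> b\<close> \<open>b + k - 1 \<le> n\<close> by (auto simp: block_def)
    then show "\<forall>x\<in>block k b. odd (f x)" by fastforce
  qed (use assms(2,3) in auto)
  have "b + k - 1 \<le> n \<longrightarrow> sum f (block k b) \<ge> 2" if "1 \<le> b" for b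
    using that
  proof (induction b rule: int_ge_induct)
    case base
    show ?case using first even_block[of 1] by presburger
  next
    case (step b)
    show ?case
    proof
      assume b: "b + 1 + k - 1 \<le> n"
      have "f b \<in> {-1, 1}" "f (b+k) \<in> {-1, 1}"
        using f step.hyps b assms(3) by simp_all
      then have "\<bar>f (b+k) - f b\<bar> \<le> 2" by auto
      moreover have "sum f (block k b) \<ge> 2" using step b by simp
      moreover have "sum f (block k (b+1)) \<noteq> 0" using nonzero step.hyps b by simp
      ultimately have "sum f (block k (b+1)) > 0"
        using sum_block_shift[OF assms(3), of f b] by linarith
      then show "sum f (block k (b+1)) \<ge> 2"
        using even_block[of "b+1"] step.hyps b by presburger
    qed
  qed
  then show ?thesis by blast
qed

lemma sum_prefix_blocks_ge:
  fixes f :: "int \<Rightarrow> int"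
  assumes "k \<ge> 1" and blocks: "\<forall>b. 1 \<le> b \<and> b + k - 1 \<le> n \<longrightarrow> sum f (block k b) \<ge> 2"
  shows "0 \<le> m \<Longrightarrow> k * m \<le> n \<Longrightarrow> 2 * m \<le> sum f {1..k * m}"
proof (induction m rule: int_ge_induct)
  case base
  show ?case by simp
next
  case (step m)
  have "0 \<le> k * m" using step.hyps assms(1) by simp
  then have "sum f {1..k * (m+1)} = sum f {1..k * m} + sum f (block k (k * m + 1))"
    using assms(1) sum_atLeastAtMost_split_int[of 1 "k*m" "k*m+k" f]
    by (simp add: block_def algebra_simps)
  moreover have "sum f (block k (k * m + 1)) \<ge> 2"
    using blocks \<open>0 \<le> k * m\<close> step.prems by (simp add: algebra_simps)
  moreover have "2 * m \<le> sum f {1..k * m}"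
    using step assms(1) by (simp add: algebra_simps)
  ultimately show ?case by simp
qed

lemma sum_lower_bounds_of_block_sums:
  fixes f :: "int \<Rightarrow> int"
  assumes f: "\<forall>x\<in>{1..n}. f x \<in> {-1, 1}" and "k \<ge> 1"
    and blocks: "\<forall>b. 1 \<le> b \<and> b + k - 1 \<le> n \<longrightarrow> sum f (block k b) \<ge> 2"
    and n: "n = k * m + r" "0 \<le> r" "r < k" and "m \<ge> 1"
  shows "2 * m - r \<le> sum f {1..n}" and "2 * m + 2 - k + r \<le> sum f {1..n}"
proof -
  have km: "k \<le> k * m" using assms(2,7) by simp
  have abs_le: "\<bar>sum f {a..b}\<bar> \<le> b - a + 1" if "1 \<le> a" "a \<le> b + 1" "b \<le> n" for a b
  proof (rule abs_sum_atLeastAtMost_le)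
    show "\<forall>x\<in>{a..b}. \<bar>f x\<bar> \<le> 1"
    proof
      fix x assume "x \<in> {a..b}"
      then have "f x \<in> {-1, 1}" using f that by auto
      then show "\<bar>f x\<bar> \<le> 1" by auto
    qed
  qed (use that in simp)
  have split: "sum f {a..c} = sum f {a..b} + sum f {b+1..c}" if "a - 1 \<le> b" "b \<le> c" for a b c
    using that by (rule sum_atLeastAtMost_split_int)
  have tail: "\<bar>sum f {k*m+1..n}\<bar> \<le> r"
    using abs_le[of "k*m+1" n] km n assms(2) by simp
  have "2 * m \<le> sum f {1..k * m}"
    using sum_prefix_blocks_ge[OF assms(2) blocks, of m] assms(7) n by simp
  then show "2 * m - r \<le> sum f {1..n}"
    using split[of 1 "k*m" n] tail km n by simp
  have "2 * (m - 1) \<le> sum f {1..k * (m - 1)}"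
    using sum_prefix_blocks_ge[OF assms(2) blocks, of "m - 1"] assms(7) n
    by (simp add: algebra_simps)
  moreover have "sum f (block k (k*m - k + 1)) \<ge> 2" "sum f (block k (n - k + 1)) \<ge> 2"
    using blocks[rule_format, of "k*m - k + 1"] blocks[rule_format, of "n - k + 1"] km n
    by auto
  moreover have "\<bar>sum f {n-k+1..k*m}\<bar> \<le> k - r"
    using abs_le[of "n-k+1" "k*m"] km n by simp
  moreover have "sum f {1..n} = sum f {1..k*m - k} + sum f (block k (k*m - k + 1))
      + sum f {k*m+1..n}"
    using split[of 1 "k*m - k" n] split[of "k*m - k + 1" "k*m" n] km n
    by (simp add: block_def)
  moreover have "sum f (block k (n - k + 1)) = sum f {n-k+1..k*m} + sum f {k*m+1..n}"
    using split[of "n-k+1" "k*m" n] n by (simp add: block_def)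
  ultimately show "2 * m + 2 - k + r \<le> sum f {1..n}"
    by (simp add: algebra_simps)
qed

text \<open>With k = 2j, the threshold k^2/4 + (q-s)k/2 + s is exactly what is needed here; the
  parity condition on s is used only when r = j - 1 and s = 1.\<close>

lemma lower_bounds_exceed:
  fixes q s n m r j :: int
  assumes j: "j \<ge> 1" and s: "s \<in> {0,1}" and parity: "s mod 2 = (q + j - 1) mod 2"
    and n: "n = 2*j*m + r" "0 \<le> r" "r < 2*j"
    and large: "n \<ge> j*j + (q-s)*j + s"
  shows "q < 2*m - r \<or> q < 2*m + 2 - 2*j + r"
proof (rule ccontr)
  assume "\<not> ?thesis"
  then have A: "2*m - r \<le> q" and B: "2*m + 2 - 2*j + r \<le> q" by auto
  have jA: "j*(2*m) \<le> j*(q+r)" using A j by (intro mult_left_mono) auto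
  have jB: "j*(2*m) \<le> j*(q+2*j-2-r)" using B j by (intro mult_left_mono) auto
  consider "r \<le> j-1-s" | "r \<ge> j+s" | "s = 1" "r = j" | "s = 1" "r = j - 1"
    using s by force
  then show False
  proof cases
    case 1
    have "(j+1)*r \<le> (j+1)*(j-1-s)" using 1 j by (intro mult_left_mono) auto
    then show False using jA n large s by (auto simp: algebra_simps)
  next
    case 2
    have "(j-1)*(j+s) \<le> (j-1)*r" using 2 j by (intro mult_left_mono) auto
    then show False using jB n large s j by (auto simp: algebra_simps; linarith)
  next
    case 3
    then show False using jB n large by (auto simp: algebra_simps)
  next
    case 4
    then have "(q + j - 1) mod 2 = 1" using parity by simp
    then have "2*m \<le> q + j - 2" using A 4 by presburger
    then have "j*(2*m) \<le> j*(q+j-2)" using j by (intro mult_left_mono) auto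
    then show False using n large 4 by (auto simp: algebra_simps)
  qed
qed

lemma sum_gt_of_block_sums_ge_two:
  fixes k q s n :: int and f :: "int \<Rightarrow> int"
  assumes "k \<ge> 2" and "even k" and "s \<in> {0, 1}"
    and "s mod 2 = (q + (k - 2) div 2) mod 2"
    and "n \<ge> k" and "4 * n \<ge> k ^ 2 + 2 * (q - s) * k + 4 * s"
    and f: "\<forall>x\<in>{1..n}. f x \<in> {-1, 1}"
    and blocks: "\<forall>b. 1 \<le> b \<and> b + k - 1 \<le> n \<longrightarrow> sum f (block k b) \<ge> 2"
  shows "sum f {1..n} > q"
proof -
  obtain j where j: "k = 2 * j" using assms(2) by blast
  define m where "m = n div k"
  define r where "r = n mod k"
  have n: "n = k * m + r" "0 \<le> r" "r < k" using assms(1) by (simp_all add: m_def r_def)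
  have "m \<ge> 1" using assms(1,5) zdiv_mono1[of k n k] by (simp add: m_def)
  have "q < 2*m - r \<or> q < 2*m + 2 - 2*j + r"
  proof (rule lower_bounds_exceed)
    show "s mod 2 = (q + j - 1) mod 2" using assms(4) j by (simp add: add_diff_eq)
    show "n \<ge> j*j + (q-s)*j + s"
      using assms(6) j by (simp add: power2_eq_square algebra_simps)
  qed (use assms(1,3) j n in auto)
  then show ?thesis
    using sum_lower_bounds_of_block_sums[OF f _ blocks n \<open>m \<ge> 1\<close>] assms(1) j by auto
qed

theorem corollary2p3:
  fixes k q s n :: int and f :: "int \<Rightarrow> int"
  assumes "k \<ge> 2" and "even k" and "q \<ge> 0"
    and "s \<in> {0, 1}" and "s mod 2 = (q + (k - 2) div 2) mod 2"
    and "n \<ge> k"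
    and "4 * n \<ge> k ^ 2 + 2 * (q - s) * k + 4 * s"
    and "\<forall>x\<in>{1..n}. f x \<in> {-1, 1}"
    and "\<bar>sum f {1..n}\<bar> \<le> q"
  shows "\<exists>b. block k b \<subseteq> {1..n} \<and> sum f (block k b) = 0"
proof (rule ccontr)
  assume "\<not> ?thesis"
  then have nonzero: "\<forall>b. 1 \<le> b \<and> b + k - 1 \<le> n \<longrightarrow> sum g (block k b) \<noteq> 0"
    if "g = f \<or> g = (\<lambda>x. - f x)" for g
    using that by (auto simp: block_def sum_negf)
  have large_sum: "sum g {1..n} > q"
    if g: "g = f \<or> g = (\<lambda>x. - f x)" and first: "sum g (block k 1) > 0" for g
  proof -
    have "\<forall>x\<in>{1..n}. g x \<in> {-1, 1}" using g assms(8) by auto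
    then show ?thesis
      using sum_gt_of_block_sums_ge_two[OF assms(1,2,4-7)]
        block_sums_ge_two[OF _ assms(2) _ nonzero[OF g] first] assms(1) by simp
  qed
  have "sum f (block k 1) \<noteq> 0" using nonzero[of f] assms(6) by simp
  then have "sum f {1..n} > q \<or> sum (\<lambda>x. - f x) {1..n} > q"
    using large_sum[of f] large_sum[of "\<lambda>x. - f x"] by (force simp: sum_negf)
  then show False using assms(9) by (auto simp: sum_negf)
qed

end
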